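(* Let $p,b$ be distinct primes and $a,c$ positive integers such that $c$ is a primitive divisor of $p^a-1$. If $b\mid p^a-1$ and $b\nmid\tfrac{p^a-1}{c}$, then $$g\Big(\tfrac{p^{ab}-1}{bc},\,p^{ab}\Big)=b\,g\Big(\tfrac{p^a-1}{c},\,p^a\Big).$$
   Context: For a prime power $q$ and a positive integer $k$, the Waring number $g(k,q)$ is the smallest $s$ (if it exists) such that every element of $\mathbb{F}_q$ is a sum of $s$ $k$-th powers of elements of $\mathbb{F}_q$. An integer $e$ is a primitive divisor of $p^a-1$ if $e\mid p^a-1$ and $e\nmid p^t-1$ for every $1\le t<a$. *)

theory Defs
  imports Main "HOL-Computational_Algebra.Primes"
begin

definition sum_of_kth_powers :: "nat \<Rightarrow> nat \<Rightarrow> 'a::field \<Rightarrow> bool" where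
  "sum_of_kth_powers s k y \<longleftrightarrow> (\<exists>xs::'a list. length xs = s \<and> y = sum_list (map (\<lambda>x. x ^ k) xs))"

text \<open>Waring number g(k,q) of the finite field of type 'a (with q = CARD('a));
  None if no such s exists.\<close>
definition waring_number :: "nat \<Rightarrow> 'a::{field,finite} itself \<Rightarrow> nat option" where
  "waring_number k _ =
     (if \<exists>s. \<forall>y::'a. sum_of_kth_powers s k y
      then Some (LEAST s. \<forall>y::'a. sum_of_kth_powers s k y)
      else None)"

definition primitive_divisor :: "nat \<Rightarrow> nat \<Rightarrow> nat \<Rightarrow> bool" where
  "primitive_divisor e p a \<longleftrightarrow> e dvd p ^ a - 1 \<and> (\<forall>t. 1 \<le> t \<and> t < a \<longrightarrow> \<not> e dvd p ^ t - 1)"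

end

theory Submission
  imports Defs "HOL-Library.Cardinality" "HOL-Number_Theory.Pocklington"
    "HOL-Algebra.Multiplicative_Group" "HOL-Computational_Algebra.Polynomial"
begin

text \<open>
  Write \<open>q = p\<^sup>a\<close>, \<open>k = (q - 1)/c\<close> and \<open>k' = (q\<^sup>b - 1)/(b c)\<close>. The field \<open>F\<close> embeds
  into \<open>K\<close> as the fixed field of \<open>x \<mapsto> x\<^sup>q\<close>. If \<open>\<gamma>\<close> generates \<open>K\<^sup>*\<close> and \<open>\<zeta> = \<gamma>\<^bsup>k'\<^esup>\<close>, then
  \<open>b k' = k (q\<^sup>b - 1)/(q - 1)\<close> shows that the \<open>k'\<close>-th powers of \<open>K\<close> are exactly the elements
  \<open>\<zeta>\<^sup>i y\<^sup>k\<close> with \<open>i < b\<close> and \<open>y \<in> F\<close>. Since \<open>b\<close> does not divide \<open>(q - 1)/c\<close>, the conjugates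
  \<open>\<zeta>\<^bsup>q\<^sup>j\<^esup>\<close> (\<open>j < b\<close>) are distinct, so \<open>1, \<zeta>, \<dots>, \<zeta>\<^bsup>b-1\<^esup>\<close> is a basis of \<open>K\<close> over \<open>F\<close>.
  Adding \<open>g(k, F)\<close> \<open>k\<close>-th powers in each of the \<open>b\<close> coordinates gives \<open>g(k', K) \<le> b g(k, F)\<close>.
  Conversely, sorting by coordinate the summands of a representation of
  \<open>x (1 + \<zeta> + \<dots> + \<zeta>\<^bsup>b-1\<^esup>)\<close>, \<open>x \<in> F\<close>, gives \<open>g(k, F) \<le> g(k', K)/b\<close>.
\<close>

section \<open>Finite fields and primitive elements\<close>

text \<open>A type-class field as a HOL-Algebra ring, to use the cyclicity of its unit group.\<close>

definition field_ring :: "'a::field ring" where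
  "field_ring =
     \<lparr>carrier = UNIV, monoid.mult = (\<lambda>x y. x * y), one = 1, ring.zero = 0, add = (\<lambda>x y. x + y)\<rparr>"

lemma field_field_ring: "field (field_ring :: 'a::field ring)"
proof -
  have "\<exists>y. x + y = 0" for x :: 'a
    using add.right_inverse by blast
  moreover have "x \<noteq> 0 \<Longrightarrow> \<exists>y. x * y = 1" for x :: 'a
    by (rule exI[of _ "inverse x"]) auto
  ultimately show ?thesis
    unfolding field_ring_def using add.right_inverse
    by unfold_locales (auto simp: algebra_simps Units_def)
qed

lemma field_ring_pow: "x [^]\<^bsub>field_ring\<^esub> (n::nat) = (x::'a::field) ^ n"
  by (induction n) (auto simp: field_ring_def)

definition primitive_element :: "'a::field \<Rightarrow> bool" where
  "primitive_element g \<longleftrightarrow> g \<noteq> 0 \<and> (\<forall>x. x \<noteq> 0 \<longrightarrow> (\<exists>n. x = g ^ n))"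

lemma exists_primitive_element: "\<exists>g::'a::{field,finite}. primitive_element g"
proof -
  let ?R = "field_ring :: 'a ring"
  interpret field ?R by (rule field_field_ring)
  have units: "carrier (mult_of ?R) = UNIV - {0}"
    by (simp add: field_ring_def)
  obtain g where "g \<in> carrier (mult_of ?R)"
    "carrier (mult_of ?R) = {g [^]\<^bsub>?R\<^esub> i | i::nat. i \<in> UNIV}"
    using finite_field_mult_group_has_gen by (auto simp: field_ring_def)
  then show ?thesis
    unfolding primitive_element_def units field_ring_pow by (intro exI[of _ g]) auto
qed

lemma one_less_CARD_field: "1 < CARD('a::{field,finite})"
  using card_mono[of UNIV "{0, 1::'a}"] by simp

lemma power_CARD_eq: "(x::'b::monoid_mult) ^ CARD('a::finite) = x * x ^ (CARD('a) - 1)"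
  using finite_UNIV_card_ge_0[where 'a = 'a] by (simp flip: power_Suc)

lemma finite_field_power_card: "(x::'a::{field,finite}) ^ CARD('a) = x"
proof (cases "x = 0")
  case False
  have "(\<Prod>y\<in>UNIV - {0}. x * y) = (\<Prod>y\<in>UNIV - {0}. y)"
    by (rule prod.reindex_bij_witness[of _ "\<lambda>y. y / x" "\<lambda>y. x * y"]) (use False in auto)
  moreover have "(\<Prod>y\<in>UNIV - {0}. x * y) = x ^ (CARD('a) - 1) * (\<Prod>y\<in>UNIV - {0}. y)"
    by (simp add: prod.distrib card_Diff_subset)
  moreover have "(\<Prod>y\<in>UNIV - {0::'a}. y) \<noteq> 0"
    by (simp add: prod_zero_iff)
  ultimately have "x ^ (CARD('a) - 1) = 1"
    by simp
  then show ?thesis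
    by (simp add: power_CARD_eq)
qed (simp add: power_CARD_eq)

lemma primitive_element_power_eq_1_iff:
  assumes "primitive_element (g::'a::{field,finite})"
  shows "g ^ n = 1 \<longleftrightarrow> (CARD('a) - 1) dvd n"
proof
  have "g * g ^ (CARD('a) - 1) = g * 1"
    using finite_field_power_card[of g] by (simp add: power_CARD_eq)
  then have g_N: "g ^ (CARD('a) - 1) = 1"
    using assms by (simp add: primitive_element_def)
  then show "g ^ n = 1" if "(CARD('a) - 1) dvd n"
    using that by (auto simp: power_mult)
  assume "g ^ n = 1"
  define r where "r = n mod (CARD('a) - 1)"
  have "g ^ n = (g ^ (CARD('a) - 1)) ^ (n div (CARD('a) - 1)) * g ^ r"
    by (simp add: r_def flip: power_mult power_add)
  with \<open>g ^ n = 1\<close> g_N have "g ^ r = 1"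
    by simp
  show "(CARD('a) - 1) dvd n"
  proof (rule ccontr)
    assume "\<not> ?thesis"
    then have "0 < r" by (simp add: r_def dvd_eq_mod_eq_0)
    have cover: "UNIV - {0} \<subseteq> (\<lambda>j. g ^ j) ` {..<r}"
    proof
      fix x :: 'a assume "x \<in> UNIV - {0}"
      then obtain m where "x = g ^ m" using assms by (auto simp: primitive_element_def)
      also have "\<dots> = (g ^ r) ^ (m div r) * g ^ (m mod r)"
        by (simp flip: power_mult power_add)
      finally show "x \<in> (\<lambda>j. g ^ j) ` {..<r}"
        using \<open>g ^ r = 1\<close> \<open>0 < r\<close> by auto
    qed
    have "CARD('a) - 1 \<le> r"
      using card_mono[OF _ cover] card_image_le[of "{..<r}" "\<lambda>j. g ^ j"]
      by (simp add: card_Diff_subset)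
    moreover have "r < CARD('a) - 1"
      using one_less_CARD_field[where 'a = 'a] by (simp add: r_def)
    ultimately show False by simp
  qed
qed

lemma prime_CHAR_finite_field: "prime CHAR('a::{field,finite})"
proof -
  have "0 < CHAR('a)"
    by (rule finite_imp_CHAR_pos) simp
  then show ?thesis
    by (rule prime_CHAR_semidom)
qed

lemma CHAR_eq_of_card_prime_power:
  assumes "CARD('a::{field,finite}) = p ^ n" "prime p" "0 < n"
  shows "CHAR('a) = p"
proof -
  have "(\<Sum>x\<in>UNIV. x) = (\<Sum>x\<in>UNIV. x + (1::'a))"
    by (rule sum.reindex_bij_witness[of _ "\<lambda>x. x + 1" "\<lambda>x. x - 1"]) auto
  then have "of_nat CARD('a) = (0::'a)"
    by (simp add: sum.distrib)
  then have "CHAR('a) dvd p ^ n"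
    using assms(1) by (simp only: of_nat_eq_0_iff_char_dvd)
  then show ?thesis
    using assms(2) prime_CHAR_finite_field[where 'a = 'a] prime_dvd_power primes_dvd_imp_eq by blast
qed

section \<open>Roots of unity\<close>

lemma power_eq_power_iff_cong:
  fixes g :: "'a::idom"
  assumes "g \<noteq> 0" and order: "\<And>n. g ^ n = 1 \<longleftrightarrow> N dvd n"
  shows "g ^ x = g ^ y \<longleftrightarrow> [x = y] (mod N)"
proof -
  have ordered: "g ^ x = g ^ y \<longleftrightarrow> [x = y] (mod N)" if "x \<le> y" for x y
  proof -
    have "g ^ y = g ^ x * g ^ (y - x)"
      using that by (simp flip: power_add)
    then have "g ^ x = g ^ y \<longleftrightarrow> g ^ (y - x) = 1"
      using \<open>g \<noteq> 0\<close> by auto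
    also have "\<dots> \<longleftrightarrow> [x = y] (mod N)"
      using order that by (simp add: cong_altdef_nat cong_sym_eq[of x])
    finally show ?thesis .
  qed
  show ?thesis
  proof (cases "x \<le> y")
    case False
    then show ?thesis
      using ordered[of y x] by (auto simp: cong_sym_eq)
  qed (rule ordered)
qed

lemma primitive_element_power_eq_iff:
  assumes "primitive_element (g::'a::{field,finite})"
  shows "g ^ x = g ^ y \<longleftrightarrow> [x = y] (mod CARD('a) - 1)"
  using assms by (intro power_eq_power_iff_cong)
    (auto simp: primitive_element_def primitive_element_power_eq_1_iff)

lemma roots_of_unity_eq_primitive_powers:
  assumes "primitive_element (g::'a::{field,finite})" and "d * m = CARD('a) - 1"
  shows "{z::'a. z ^ d = 1} = (\<lambda>j. g ^ (m * j)) ` {..<d}"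
proof (intro equalityI subsetI)
  have "0 < d * m"
    using assms(2) one_less_CARD_field[where 'a = 'a] by simp
  then have "0 < d"
    by simp
  fix z :: 'a assume "z \<in> {z. z ^ d = 1}"
  then have "z ^ d = 1" by simp
  then have "z \<noteq> 0"
    using \<open>0 < d\<close> by (auto simp: power_0_left)
  then obtain n where n: "z = g ^ n"
    using assms(1) unfolding primitive_element_def by blast
  with \<open>z ^ d = 1\<close> have "g ^ (d * n) = 1"
    by (simp only: power_mult[symmetric] mult_ac)
  then have "d * m dvd d * n"
    by (simp only: primitive_element_power_eq_1_iff[OF assms(1)] assms(2))
  then obtain t where t: "n = m * t"
    using \<open>0 < d\<close> by (auto elim: dvdE)
  have "[m * t = m * (t mod d)] (mod m * d)"
    by (simp add: cong_def mod_mult_mult1)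
  then have "z = g ^ (m * (t mod d))"
    using n t primitive_element_power_eq_iff[OF assms(1)] assms(2) by (simp add: mult_ac)
  then show "z \<in> (\<lambda>j. g ^ (m * j)) ` {..<d}"
    using \<open>0 < d\<close> by auto
next
  fix z assume "z \<in> (\<lambda>j. g ^ (m * j)) ` {..<d}"
  then obtain j where "z = g ^ (m * j)"
    by blast
  then have "z ^ d = g ^ ((d * m) * j)"
    by (simp only: power_mult[symmetric] mult_ac)
  then show "z \<in> {z. z ^ d = 1}"
    using primitive_element_power_eq_1_iff[OF assms(1)] assms(2) by simp
qed

lemma card_roots_of_unity:
  assumes "d dvd CARD('a::{field,finite}) - 1"
  shows "card {z::'a. z ^ d = 1} = d"
proof -
  obtain g :: 'a where g: "primitive_element g"
    using exists_primitive_element by blast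
  obtain m where m: "CARD('a) - 1 = d * m"
    using assms by (rule dvdE)
  then have "0 < m"
    using one_less_CARD_field[where 'a = 'a] by (cases m) auto
  have "inj_on (\<lambda>j. g ^ (m * j)) {..<d}"
  proof (rule inj_onI)
    fix i j assume "i \<in> {..<d}" "j \<in> {..<d}" "g ^ (m * i) = g ^ (m * j)"
    moreover have "CARD('a) - 1 = m * d"
      using m by (simp add: mult.commute)
    ultimately have "(m * i) mod (m * d) = (m * j) mod (m * d)"
      by (simp add: primitive_element_power_eq_iff[OF g] cong_def)
    then have "m * (i mod d) = m * (j mod d)"
      by (simp only: mod_mult_mult1)
    then show "i = j"
      using \<open>0 < m\<close> \<open>i \<in> {..<d}\<close> \<open>j \<in> {..<d}\<close> by simp
  qed
  then show ?thesis
    by (simp add: roots_of_unity_eq_primitive_powers[OF g m[symmetric]] card_image)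
qed

lemma power_eq_self_iff:
  assumes "0 < q"
  shows "(z::'a::idom) ^ q = z \<longleftrightarrow> z = 0 \<or> z ^ (q - 1) = 1"
proof -
  have "z ^ q = z * z ^ (q - 1)"
    using assms by (simp flip: power_Suc)
  then show ?thesis
    by (metis mult_cancel_left1 mult_zero_left)
qed

lemma card_power_fixed_points:
  assumes "1 < q" "(q - 1) dvd CARD('a::{field,finite}) - 1"
  shows "card {z::'a. z ^ q = z} = q"
proof -
  have "{z::'a. z ^ q = z} = insert 0 {z. z ^ (q - 1) = 1}"
    using assms(1) by (auto simp: power_eq_self_iff)
  moreover have "0 \<notin> {z::'a. z ^ (q - 1) = 1}"
    using assms(1) by (simp add: power_0_left)
  ultimately show ?thesis
    using card_roots_of_unity[OF assms(2)] assms(1) by simp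
qed

lemma nat_power_diff_1_eq:
  assumes "1 \<le> (q::nat)"
  shows "q ^ n - 1 = (q - 1) * (\<Sum>i<n. q ^ i)"
proof -
  have "int (q ^ n - 1) = int q ^ n - 1"
    using assms by (simp add: of_nat_diff)
  also have "\<dots> = (int q - 1) * (\<Sum>i<n. int q ^ i)"
    by (rule power_diff_1_eq)
  also have "\<dots> = int ((q - 1) * (\<Sum>i<n. q ^ i))"
    using assms by (simp add: of_nat_diff)
  finally show ?thesis
    by (simp only: of_nat_eq_iff)
qed

lemma dvd_geometric_sum:
  assumes "[q = 1] (mod b)"
  shows "b dvd (\<Sum>i<b. (q::nat) ^ i)"
proof -
  have "[(\<Sum>i<b. q ^ i) = (\<Sum>i<b. 1)] (mod b)"
    using assms by (intro cong_sum) (metis cong_pow power_one)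
  then show ?thesis
    using cong_dvd_iff by fastforce
qed

lemma ord_eq_prime_exponent:
  fixes q m :: nat
  assumes "prime b" "[q ^ b = 1] (mod m)" "\<not> [q = 1] (mod m)"
  shows "ord m q = b"
proof -
  have "ord m q dvd b"
    using assms(2) ord_divides by blast
  moreover have "ord m q \<noteq> 1"
    using ord[of q m] assms(3) by auto
  ultimately show ?thesis
    using assms(1) by (auto simp: prime_nat_iff)
qed

lemma cong_prime_order_powers_imp_eq:
  fixes q m :: nat
  assumes "prime b" "[q ^ b = 1] (mod m)" "\<not> [q = 1] (mod m)"
    and "j < b" "l < b" "[q ^ j = q ^ l] (mod m)"
  shows "j = l"
proof -
  have "coprime (q ^ b) m"
    using cong_imp_coprime[OF cong_sym[OF assms(2)]] by simp
  then have "coprime m q"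
    using prime_gt_0_nat[OF assms(1)] by (simp add: coprime_commute)
  then have "[j = l] (mod b)"
    using assms(6) order_divides_expdiff ord_eq_prime_exponent[OF assms(1-3)] by metis
  with assms(4,5) show ?thesis
    by (simp add: cong_def)
qed

lemma prime_degree_exponents:
  fixes q b c k k' :: nat
  assumes "1 < q" "0 < b" and k: "k * c = q - 1" and k': "k' * (b * c) = q ^ b - 1"
    and "\<not> b * c dvd q - 1"
  shows "0 < k" "0 < k'" "(\<Sum>i<b. q ^ i) * k = b * k'"
    and "[q ^ b = 1] (mod b * c)" "\<not> [q = 1] (mod b * c)"
proof -
  have "1 < q ^ b"
    using assms(1,2) by (rule one_less_power)
  then have "0 < k' * (b * c)" "0 < k * c"
    using assms(1) by (simp_all add: k k')
  then show "0 < k" "0 < k'"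
    by simp_all
  have "(\<Sum>i<b. q ^ i) * k * c = (q - 1) * (\<Sum>i<b. q ^ i)"
    using k[symmetric] by (simp add: mult_ac)
  also have "\<dots> = q ^ b - 1"
    using assms(1) by (intro nat_power_diff_1_eq[symmetric]) simp
  also have "\<dots> = b * k' * c"
    using k'[symmetric] by (simp add: mult_ac)
  finally show "(\<Sum>i<b. q ^ i) * k = b * k'"
    using \<open>0 < k * c\<close> by simp
  have "b * c dvd q ^ b - 1"
    using k' dvd_triv_right[of "b * c" k'] by simp
  then show "[q ^ b = 1] (mod b * c)"
    by (simp only: cong_altdef_nat[OF less_imp_le[OF \<open>1 < q ^ b\<close>]])
  show "\<not> [q = 1] (mod b * c)"
    using assms(5) by (simp only: cong_altdef_nat[OF less_imp_le[OF assms(1)]] not_False_eq_True)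
qed

locale field_hom =
  fixes \<phi> :: "'a::field \<Rightarrow> 'b::field"
  assumes hom_add: "\<phi> (x + y) = \<phi> x + \<phi> y"
    and hom_mult: "\<phi> (x * y) = \<phi> x * \<phi> y"
    and hom_one: "\<phi> 1 = 1"
begin

lemma hom_zero: "\<phi> 0 = 0"
proof -
  have "\<phi> 0 + \<phi> 0 = \<phi> 0 + 0"
    using hom_add[of 0 0] by simp
  then show ?thesis
    by (rule add_left_imp_eq)
qed

lemma hom_diff: "\<phi> (x - y) = \<phi> x - \<phi> y"
  using hom_add[of "x - y" y] by (simp add: algebra_simps)

lemma hom_power: "\<phi> (x ^ n) = \<phi> x ^ n"
  by (induction n) (simp_all add: hom_one hom_mult)

lemma hom_sum: "\<phi> (\<Sum>i\<in>A. f i) = (\<Sum>i\<in>A. \<phi> (f i))"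
  by (induction A rule: infinite_finite_induct) (simp_all add: hom_zero hom_add)

lemma hom_eq_0_iff: "\<phi> x = 0 \<longleftrightarrow> x = 0"
proof
  assume "\<phi> x = 0"
  show "x = 0"
  proof (rule ccontr)
    assume "x \<noteq> 0"
    then have "\<phi> x * \<phi> (inverse x) = 1"
      by (simp flip: hom_mult hom_one)
    with \<open>\<phi> x = 0\<close> show False
      by simp
  qed
qed (simp add: hom_zero)

lemma inj_hom: "inj \<phi>"
  by (rule injI) (metis hom_diff hom_eq_0_iff right_minus_eq)

end

section \<open>Embedding a finite field into a larger one\<close>

definition eval_int_poly :: "'a::comm_ring_1 \<Rightarrow> int poly \<Rightarrow> 'a" where
  "eval_int_poly x P = poly (map_poly of_int P) x"

lemma map_poly_of_int_add: "map_poly of_int (P + Q) = map_poly of_int P + map_poly of_int Q"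
  by (rule poly_eqI) (simp add: coeff_map_poly)

lemma map_poly_of_int_diff: "map_poly of_int (P - Q) = map_poly of_int P - map_poly of_int Q"
  by (rule poly_eqI) (simp add: coeff_map_poly)

lemma map_poly_of_int_mult: "map_poly of_int (P * Q) = map_poly of_int P * map_poly of_int Q"
  by (rule poly_eqI) (simp add: coeff_map_poly coeff_mult)

lemma map_poly_of_int_eq_0_iff:
  "map_poly (of_int :: int \<Rightarrow> 'a::ring_1) P = 0 \<longleftrightarrow> (\<forall>i. int CHAR('a) dvd coeff P i)"
  by (simp add: poly_eq_iff coeff_map_poly of_int_eq_0_iff_char_dvd)

lemma eval_int_poly_add: "eval_int_poly x (P + Q) = eval_int_poly x P + eval_int_poly x Q"
  by (simp add: eval_int_poly_def map_poly_of_int_add)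

lemma eval_int_poly_diff: "eval_int_poly x (P - Q) = eval_int_poly x P - eval_int_poly x Q"
  by (simp add: eval_int_poly_def map_poly_of_int_diff)

lemma eval_int_poly_mult: "eval_int_poly x (P * Q) = eval_int_poly x P * eval_int_poly x Q"
  by (simp add: eval_int_poly_def map_poly_of_int_mult)

lemma eval_int_poly_smult: "eval_int_poly x (smult c P) = of_int c * eval_int_poly x P"
  by (simp add: eval_int_poly_def map_poly_smult)

lemma eval_int_poly_monom: "eval_int_poly x (monom c n) = of_int c * x ^ n"
  by (simp add: eval_int_poly_def map_poly_monom poly_monom)

lemma eval_int_poly_1: "eval_int_poly x 1 = 1"
  by (simp add: eval_int_poly_def)

lemma eval_int_poly_eq_0_if_CHAR_dvd:
  "(\<forall>i. int CHAR('a) dvd coeff P i) \<Longrightarrow> eval_int_poly (x::'a::comm_ring_1) P = 0"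
  by (simp add: eval_int_poly_def flip: map_poly_of_int_eq_0_iff)

text \<open>Reduce the coefficients modulo \<open>p\<close> and scale by an inverse of the leading one.\<close>

lemma exists_monic_annihilator_le_degree:
  fixes \<alpha> :: "'a::field"
  assumes "prime CHAR('a)" and "eval_int_poly \<alpha> R = 0" and "map_poly (of_int :: int \<Rightarrow> 'a) R \<noteq> 0"
  shows "\<exists>g. lead_coeff g = 1 \<and> degree g \<le> degree R \<and> eval_int_poly \<alpha> g = 0"
proof -
  define p where "p = int CHAR('a)"
  define R' where "R' = map_poly (\<lambda>c. c mod p) R"
  have "map_poly (of_int :: int \<Rightarrow> 'a) (R - R') = 0"
    by (simp add: map_poly_of_int_eq_0_iff R'_def coeff_map_poly p_def mod_eq_dvd_iff[symmetric])
  then have same: "map_poly (of_int :: int \<Rightarrow> 'a) R' = map_poly of_int R"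
    by (simp add: map_poly_of_int_diff)
  then have "R' \<noteq> 0" "eval_int_poly \<alpha> R' = 0"
    using assms(2,3) by (auto simp: eval_int_poly_def)
  define d where "d = degree R'"
  define c where "c = lead_coeff R'"
  have "\<not> p dvd c"
  proof
    assume "p dvd c"
    moreover have "c = coeff R d mod p"
      by (simp add: c_def d_def R'_def coeff_map_poly)
    ultimately have "c = 0"
      by (simp add: dvd_eq_mod_eq_0)
    with \<open>R' \<noteq> 0\<close> show False
      by (simp add: c_def)
  qed
  then have "coprime c p"
    using assms(1) prime_imp_coprime[of p c] by (simp add: p_def coprime_commute)
  then obtain u where u: "[c * u = 1] (mod p)"
    using cong_solve_coprime_int by blast
  define g where "g = smult u R' + monom (1 - u * c) d"
  have coeff_g: "coeff g n = u * coeff R' n + (if n = d then 1 - u * c else 0)" for n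
    by (simp add: g_def coeff_monom)
  have "degree g \<le> d"
    by (rule degree_le) (simp add: coeff_g d_def coeff_eq_0)
  moreover have "coeff g d = 1"
    by (simp add: coeff_g c_def d_def)
  ultimately have "degree g = d"
    by (metis le_antisym le_degree one_neq_zero)
  moreover have "degree R' \<le> degree R"
    unfolding R'_def by (rule map_poly_degree_leq)
  moreover have "p dvd 1 - u * c"
    using u by (simp add: cong_iff_dvd_diff dvd_diff_commute mult.commute)
  then have "of_int (1 - u * c) = (0::'a)"
    by (simp only: p_def of_int_eq_0_iff_char_dvd)
  then have "eval_int_poly \<alpha> g = 0"
    using \<open>eval_int_poly \<alpha> R' = 0\<close> by (simp add: g_def eval_int_poly_add eval_int_poly_smult eval_int_poly_monom)
  ultimately show ?thesis
    using \<open>coeff g d = 1\<close> d_def by (intro exI[of _ g]) simp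
qed

definition X_power_minus_X :: "nat \<Rightarrow> int poly" where
  "X_power_minus_X q = monom 1 q - monom 1 1"

lemma eval_X_power_minus_X: "eval_int_poly x (X_power_minus_X q) = x ^ q - x"
  by (simp add: X_power_minus_X_def eval_int_poly_diff eval_int_poly_monom)

lemma coeff_X_power_minus_X:
  "coeff (X_power_minus_X q) n = (if n = q then 1 else 0) - (if n = 1 then 1 else 0)"
  by (simp add: X_power_minus_X_def coeff_monom)

lemma degree_X_power_minus_X:
  assumes "1 < q"
  shows "degree (X_power_minus_X q) = q" and "lead_coeff (X_power_minus_X q) = 1"
proof -
  have "degree (X_power_minus_X q) \<le> q"
    by (rule degree_le) (use assms in \<open>simp add: coeff_X_power_minus_X\<close>)
  moreover have "coeff (X_power_minus_X q) q = 1"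
    using assms by (simp add: coeff_X_power_minus_X)
  ultimately show "degree (X_power_minus_X q) = q"
    by (metis le_antisym le_degree one_neq_zero)
  with \<open>coeff (X_power_minus_X q) q = 1\<close> show "lead_coeff (X_power_minus_X q) = 1"
    by simp
qed

text \<open>
  Together with \<open>CHAR('a)\<close>, \<open>f\<close> generates the kernel of evaluation at \<open>\<alpha>\<close> on \<open>\<int>[X]\<close>: it
  stands for the minimal polynomial of \<open>\<alpha>\<close> over the prime field.
\<close>

definition minimal_poly_mod_char :: "'a::field \<Rightarrow> int poly \<Rightarrow> bool" where
  "minimal_poly_mod_char \<alpha> f \<longleftrightarrow> lead_coeff f = 1 \<and> eval_int_poly \<alpha> f = 0 \<and>
     (\<forall>P. eval_int_poly \<alpha> P = 0 \<longrightarrow> (\<exists>Q R. P = f * Q + R \<and> (\<forall>i. int CHAR('a) dvd coeff R i)))"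

lemma exists_minimal_poly_mod_char: "\<exists>f. minimal_poly_mod_char (\<alpha>::'a::{field,finite}) f"
proof -
  let ?annihilates = "\<lambda>g. lead_coeff g = 1 \<and> eval_int_poly \<alpha> g = 0"
  have "?annihilates (X_power_minus_X CARD('a))"
    using one_less_CARD_field[where 'a = 'a]
    by (simp add: degree_X_power_minus_X coeff_X_power_minus_X eval_X_power_minus_X
        finite_field_power_card)
  then obtain f where f: "?annihilates f" and least: "\<And>g. ?annihilates g \<Longrightarrow> degree f \<le> degree g"
    using ex_has_least_nat[of ?annihilates _ degree] by blast
  have "\<exists>Q R. P = f * Q + R \<and> (\<forall>i. int CHAR('a) dvd coeff R i)" if "eval_int_poly \<alpha> P = 0" for P
  proof -
    have "f \<noteq> 0"
      using f by auto
    obtain Q R where "pseudo_divmod P f = (Q, R)"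
      by force
    then have P: "P = f * Q + R" and "R = 0 \<or> degree R < degree f"
      using pseudo_divmod[OF \<open>f \<noteq> 0\<close>] f by auto
    have "eval_int_poly \<alpha> R = 0"
      using that f by (simp add: P eval_int_poly_add eval_int_poly_mult)
    have "map_poly (of_int :: int \<Rightarrow> 'a) R = 0"
    proof (rule ccontr)
      assume "map_poly (of_int :: int \<Rightarrow> 'a) R \<noteq> 0"
      with prime_CHAR_finite_field \<open>eval_int_poly \<alpha> R = 0\<close>
      obtain g where "lead_coeff g = 1" "degree g \<le> degree R" "eval_int_poly \<alpha> g = 0"
        using exists_monic_annihilator_le_degree by blast
      moreover have "degree R < degree f"
        using \<open>R = 0 \<or> degree R < degree f\<close> \<open>map_poly (of_int :: int \<Rightarrow> 'a) R \<noteq> 0\<close> by auto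
      ultimately show False
        using least[of g] by simp
    qed
    then show ?thesis
      using P map_poly_of_int_eq_0_iff by blast
  qed
  with f show ?thesis
    unfolding minimal_poly_mod_char_def by blast
qed

lemma minimal_poly_mod_char_transfer:
  fixes \<alpha> :: "'a::field" and \<beta> :: "'b::comm_ring_1"
  assumes "minimal_poly_mod_char \<alpha> f" "CHAR('b) = CHAR('a)"
    and "eval_int_poly \<beta> f = 0" "eval_int_poly \<alpha> P = 0"
  shows "eval_int_poly \<beta> P = 0"
proof -
  obtain Q R where "P = f * Q + R" "\<forall>i. int CHAR('a) dvd coeff R i"
    using assms(1,4) unfolding minimal_poly_mod_char_def by blast
  with assms(2,3) show ?thesis
    by (simp add: eval_int_poly_add eval_int_poly_mult eval_int_poly_eq_0_if_CHAR_dvd)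
qed

lemma minimal_poly_mod_char_has_root:
  fixes \<alpha> :: "'a::{field,finite}"
  assumes "minimal_poly_mod_char \<alpha> f" "CHAR('b::field) = CHAR('a)"
    and "CARD('a) \<le> card {z::'b. z ^ CARD('a) = z}"
  shows "\<exists>\<beta>::'b. eval_int_poly \<beta> f = 0"
proof (rule ccontr)
  assume no_root: "\<not> ?thesis"
  let ?q = "CARD('a)"
  let ?map = "map_poly (of_int :: int \<Rightarrow> 'b)"
  have "1 < ?q"
    by (rule one_less_CARD_field)
  obtain Q R where X: "X_power_minus_X ?q = f * Q + R" and "\<forall>i. int CHAR('a) dvd coeff R i"
    using assms(1) unfolding minimal_poly_mod_char_def
    by (metis eval_X_power_minus_X finite_field_power_card right_minus_eq)
  with assms(2) have "?map (X_power_minus_X ?q) = ?map f * ?map Q"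
    by (simp add: map_poly_of_int_add map_poly_of_int_mult map_poly_of_int_eq_0_iff)
  moreover have "degree (?map (X_power_minus_X ?q)) = ?q" "degree (?map f) = degree f"
    using assms(1) \<open>1 < ?q\<close> by (simp_all add: map_poly_degree_eq degree_X_power_minus_X
        coeff_X_power_minus_X minimal_poly_mod_char_def)
  moreover have "0 < degree f"
  proof (rule ccontr)
    assume "\<not> 0 < degree f"
    then have "f = 1"
      using assms(1) degree_0_id[of f] by (simp add: minimal_poly_mod_char_def one_pCons)
    then show False
      using assms(1) by (simp add: minimal_poly_mod_char_def eval_int_poly_1)
  qed
  ultimately have "?map Q \<noteq> 0" "?map f \<noteq> 0"
    using \<open>1 < ?q\<close> by auto
  with \<open>degree (?map f) = degree f\<close> \<open>0 < degree f\<close> have "degree (?map Q) < ?q"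
    using \<open>degree (?map (X_power_minus_X ?q)) = ?q\<close> \<open>?map (X_power_minus_X ?q) = ?map f * ?map Q\<close>
    by (simp add: degree_mult_eq)
  have "{z::'b. z ^ ?q = z} \<subseteq> {z. poly (?map Q) z = 0}"
  proof
    fix z :: 'b assume "z \<in> {z. z ^ ?q = z}"
    then have "poly (?map f) z * poly (?map Q) z = 0"
      using eval_X_power_minus_X[of z ?q] \<open>?map (X_power_minus_X ?q) = ?map f * ?map Q\<close>
      by (simp add: eval_int_poly_def)
    with no_root show "z \<in> {z. poly (?map Q) z = 0}"
      by (auto simp: eval_int_poly_def)
  qed
  then have "card {z::'b. z ^ ?q = z} \<le> degree (?map Q)"
    using card_mono[OF poly_roots_finite[OF \<open>?map Q \<noteq> 0\<close>]] card_poly_roots_bound[OF \<open>?map Q \<noteq> 0\<close>]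
    by (meson le_trans)
  with assms(3) \<open>degree (?map Q) < ?q\<close> show False
    by simp
qed

lemma eval_int_poly_surj:
  assumes "primitive_element (\<alpha>::'a::field)"
  shows "\<exists>P. eval_int_poly \<alpha> P = x"
proof (cases "x = 0")
  case True
  then show ?thesis
    by (intro exI[of _ 0]) (simp add: eval_int_poly_def)
next
  case False
  then obtain n where "x = \<alpha> ^ n"
    using assms by (auto simp: primitive_element_def)
  then show ?thesis
    by (intro exI[of _ "monom 1 n"]) (simp add: eval_int_poly_monom)
qed

lemma finite_field_embedding:
  assumes "CHAR('b::field) = CHAR('a::{field,finite})"
    and "CARD('a) \<le> card {z::'b. z ^ CARD('a) = z}"
  shows "\<exists>\<phi>::'a \<Rightarrow> 'b. field_hom \<phi>"
proof -
  obtain \<alpha> :: 'a where \<alpha>: "primitive_element \<alpha>"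
    using exists_primitive_element by blast
  obtain f where f: "minimal_poly_mod_char \<alpha> f"
    using exists_minimal_poly_mod_char by blast
  obtain \<beta> :: 'b where \<beta>: "eval_int_poly \<beta> f = 0"
    using minimal_poly_mod_char_has_root[OF f assms] by blast
  define \<phi> where "\<phi> x = eval_int_poly \<beta> (SOME P. eval_int_poly \<alpha> P = x)" for x
  have \<phi>_eval: "\<phi> (eval_int_poly \<alpha> P) = eval_int_poly \<beta> P" for P
  proof -
    define P' where "P' = (SOME P'. eval_int_poly \<alpha> P' = eval_int_poly \<alpha> P)"
    have "eval_int_poly \<alpha> P' = eval_int_poly \<alpha> P"
      unfolding P'_def by (rule someI_ex) blast
    then have "eval_int_poly \<beta> (P' - P) = 0"
      using minimal_poly_mod_char_transfer[OF f assms(1) \<beta>, of "P' - P"] by (simp add: eval_int_poly_diff)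
    then show ?thesis
      by (simp add: \<phi>_def P'_def eval_int_poly_diff)
  qed
  have "field_hom \<phi>"
  proof
    fix x y :: 'a
    obtain P Q where "x = eval_int_poly \<alpha> P" "y = eval_int_poly \<alpha> Q"
      using eval_int_poly_surj[OF \<alpha>] by metis
    then show "\<phi> (x + y) = \<phi> x + \<phi> y" "\<phi> (x * y) = \<phi> x * \<phi> y"
      by (simp_all flip: eval_int_poly_add eval_int_poly_mult add: \<phi>_eval)
  next
    show "\<phi> 1 = 1"
      using \<phi>_eval[of 1] by (simp add: eval_int_poly_1)
  qed
  then show ?thesis
    by blast
qed

lemma range_field_hom_eq_fixed_points:
  fixes \<phi> :: "'a::{field,finite} \<Rightarrow> 'b::field"
  assumes "field_hom \<phi>" and "card {z::'b. z ^ CARD('a) = z} = CARD('a)"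
  shows "range \<phi> = {z. z ^ CARD('a) = z}"
proof (rule card_subset_eq)
  interpret field_hom \<phi> by fact
  show "finite {z::'b. z ^ CARD('a) = z}"
    using assms(2) card_ge_0_finite by force
  show "range \<phi> \<subseteq> {z. z ^ CARD('a) = z}"
    by (auto simp flip: hom_power simp: finite_field_power_card)
  show "card (range \<phi>) = card {z::'b. z ^ CARD('a) = z}"
    using inj_hom by (simp add: card_image assms(2))
qed

section \<open>A prime degree extension over a subfield\<close>

lemma power_fixed_point_iff_primitive_power:
  assumes "primitive_element (g::'a::{field,finite})" and "(q - 1) * S = CARD('a) - 1" and "0 < q"
    and "z \<noteq> 0"
  shows "z ^ q = z \<longleftrightarrow> (\<exists>t. z = g ^ (S * t))"
proof -
  have "z ^ q = z \<longleftrightarrow> z ^ (q - 1) = 1"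
    using assms(3,4) by (simp add: power_eq_self_iff)
  also have "\<dots> \<longleftrightarrow> (\<exists>t. z = g ^ (S * t))"
  proof
    assume "z ^ (q - 1) = 1"
    then show "\<exists>t. z = g ^ (S * t)"
      using roots_of_unity_eq_primitive_powers[OF assms(1,2)] by blast
  next
    assume "\<exists>t. z = g ^ (S * t)"
    then obtain t where "z = g ^ (S * t)" ..
    then have "z ^ (q - 1) = g ^ (((q - 1) * S) * t)"
      by (simp only: power_mult[symmetric] mult_ac)
    then show "z ^ (q - 1) = 1"
      using assms(2) by (simp add: primitive_element_power_eq_1_iff[OF assms(1)])
  qed
  finally show ?thesis .
qed

lemma kth_powers_decomposition:
  fixes \<phi> :: "'a::field \<Rightarrow> 'b::{field,finite}"
  assumes "field_hom \<phi>" and \<gamma>: "primitive_element \<gamma>"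
    and range_\<phi>: "range \<phi> = {z. z ^ q = z}" and "0 < q" and S: "(q - 1) * S = CARD('b) - 1"
    and k: "S * k = b * k'" and "0 < b" "0 < k" "0 < k'"
  shows "range (\<lambda>y::'b. y ^ k') = {(\<gamma> ^ k') ^ i * \<phi> (z ^ k) | i z. i < b}"
proof -
  interpret field_hom \<phi> by fact
  have fixed: "z ^ q = z \<longleftrightarrow> (\<exists>t. z = \<gamma> ^ (S * t))" if "z \<noteq> 0" for z
    by (rule power_fixed_point_iff_primitive_power[OF \<gamma> S \<open>0 < q\<close> that])
  have "y ^ k' \<in> {(\<gamma> ^ k') ^ i * \<phi> (z ^ k) | i z. i < b}" for y
  proof (cases "y = 0")
    case True
    then show ?thesis
      using \<open>0 < b\<close> \<open>0 < k\<close> \<open>0 < k'\<close> by (auto intro!: exI[of _ 0] simp: hom_zero power_0_left)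
  next
    case False
    then obtain n where "y = \<gamma> ^ n"
      using \<gamma> by (auto simp: primitive_element_def)
    have "(\<gamma> ^ (S * (n div b))) ^ q = \<gamma> ^ (S * (n div b))"
      using fixed \<gamma> by (auto simp: primitive_element_def)
    then obtain z where z: "\<phi> z = \<gamma> ^ (S * (n div b))"
      using range_\<phi> by (metis (mono_tags, lifting) mem_Collect_eq rangeE)
    have exponent: "(n mod b + b * (n div b)) * k' = k' * (n mod b) + (S * k) * (n div b)"
      by (simp only: k distrib_left distrib_right mult_ac)
    have "y ^ k' = \<gamma> ^ ((n mod b + b * (n div b)) * k')"
      using \<open>y = \<gamma> ^ n\<close> by (simp add: power_mult)
    also have "\<dots> = \<gamma> ^ (k' * (n mod b) + (S * k) * (n div b))"
      by (simp only: exponent)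
    also have "\<dots> = (\<gamma> ^ k') ^ (n mod b) * \<phi> (z ^ k)"
      by (simp add: hom_power z power_add flip: power_mult) (simp add: mult_ac)
    finally show ?thesis
      using \<open>0 < b\<close> by auto
  qed
  moreover have "(\<gamma> ^ k') ^ i * \<phi> (z ^ k) \<in> range (\<lambda>y. y ^ k')" for i z
  proof (cases "z = 0")
    case True
    then show ?thesis
      using \<open>0 < k\<close> \<open>0 < k'\<close> by (auto simp: hom_zero power_0_left intro!: image_eqI[of _ _ 0])
  next
    case False
    then have "\<phi> z \<noteq> 0" "\<phi> z ^ q = \<phi> z"
      using range_\<phi> by (auto simp: hom_eq_0_iff)
    then obtain t where "\<phi> z = \<gamma> ^ (S * t)"
      using fixed by blast
    then have "(\<gamma> ^ k') ^ i * \<phi> (z ^ k) = \<gamma> ^ (k' * i + (S * k) * t)"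
      by (simp add: hom_power power_add flip: power_mult) (simp add: mult_ac)
    also have "k' * i + (S * k) * t = (i + b * t) * k'"
      by (simp add: k algebra_simps)
    finally have "(\<gamma> ^ k') ^ i * \<phi> (z ^ k) = (\<gamma> ^ (i + b * t)) ^ k'"
      by (simp only: power_mult)
    then show ?thesis
      by auto
  qed
  ultimately show ?thesis
    by blast
qed

text \<open>The polynomial \<open>\<Sum>i<b. c i X\<^sup>i\<close> vanishes at the \<open>b\<close> distinct conjugates \<open>\<zeta>\<^bsup>q\<^sup>j\<^esup>\<close>.\<close>

lemma frobenius_invariant_coeffs_eq_0:
  fixes \<zeta> :: "'a::field" and c :: "nat \<Rightarrow> 'a"
  assumes "prime CHAR('a)" and q: "q = CHAR('a) ^ n"
    and fixed: "\<And>i. i < b \<Longrightarrow> c i ^ q = c i"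
    and conjugates: "inj_on (\<lambda>j. \<zeta> ^ q ^ j) {..<b}"
    and "(\<Sum>i<b. c i * \<zeta> ^ i) = 0"
  shows "\<forall>i<b. c i = 0"
proof -
  define P where "P = (\<Sum>i<b. monom (c i) i)"
  have coeff_P: "coeff P i = (if i < b then c i else 0)" for i
    by (simp add: P_def coeff_sum coeff_monom)
  have root: "poly P (\<zeta> ^ q ^ j) = 0" for j
  proof -
    have fixed_j: "c i ^ q ^ j = c i" if "i < b" for i
      by (induction j) (simp_all add: that fixed power_mult)
    have "(\<Sum>i<b. c i * \<zeta> ^ i) ^ q ^ j = (\<Sum>i<b. (c i * \<zeta> ^ i) ^ q ^ j)"
      by (rule freshmans_dream_sum'[OF assms(1), where n = "n * j"]) (simp add: q power_mult)
    also have "\<dots> = poly P (\<zeta> ^ q ^ j)"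
      by (simp add: P_def poly_sum poly_monom power_mult_distrib fixed_j flip: power_mult)
        (simp add: mult.commute)
    moreover have "0 < q"
      using assms(1) q prime_gt_0_nat by simp
    ultimately show ?thesis
      using assms(5) by (simp add: power_0_left)
  qed
  have "P = 0"
  proof (rule ccontr)
    assume "P \<noteq> 0"
    have "(\<lambda>j. \<zeta> ^ q ^ j) ` {..<b} \<subseteq> {x. poly P x = 0}"
      using root by auto
    then have "b \<le> card {x. poly P x = 0}"
      using card_mono[OF poly_roots_finite[OF \<open>P \<noteq> 0\<close>]] conjugates by (metis card_image card_lessThan)
    also have "\<dots> \<le> degree P"
      by (rule card_poly_roots_bound[OF \<open>P \<noteq> 0\<close>])
    also have "degree P < b"
      using \<open>P \<noteq> 0\<close> by (metis coeff_P leading_coeff_0_iff not_le_imp_less)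
    finally show False
      by simp
  qed
  then show ?thesis
    using coeff_P by (metis coeff_0)
qed

lemma inj_on_conjugates_of_primitive_power:
  fixes q :: nat
  assumes "primitive_element (\<gamma>::'a::{field,finite})" and "CARD('a) - 1 = k' * m"
    and "prime b" "[q ^ b = 1] (mod m)" "\<not> [q = 1] (mod m)"
  shows "inj_on (\<lambda>j. (\<gamma> ^ k') ^ q ^ j) {..<b}"
proof (rule inj_onI)
  fix j l assume "j \<in> {..<b}" "l \<in> {..<b}" and "(\<gamma> ^ k') ^ q ^ j = (\<gamma> ^ k') ^ q ^ l"
  then have "(k' * q ^ j) mod (k' * m) = (k' * q ^ l) mod (k' * m)"
    using assms(2) by (simp add: primitive_element_power_eq_iff[OF assms(1)] cong_def flip: power_mult)
  moreover have "0 < k'"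
    using assms(2) one_less_CARD_field[where 'a = 'a] by (cases k') auto
  ultimately have "[q ^ j = q ^ l] (mod m)"
    by (simp add: mod_mult_mult1 cong_def)
  then show "j = l"
    using cong_prime_order_powers_imp_eq[OF assms(3-5)] \<open>j \<in> {..<b}\<close> \<open>l \<in> {..<b}\<close> by blast
qed

lemma field_hom_combinations_surj:
  fixes \<phi> :: "'a::{field,finite} \<Rightarrow> 'b::{field,finite}"
  assumes "field_hom \<phi>" and card: "CARD('b) = CARD('a) ^ b"
    and independent: "\<And>u. (\<Sum>i<b. \<zeta> ^ i * \<phi> (u i)) = 0 \<Longrightarrow> \<forall>i<b. u i = 0"
  shows "\<exists>u. y = (\<Sum>i<b. \<zeta> ^ i * \<phi> (u i))"
proof -
  interpret field_hom \<phi> by fact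
  define \<Phi> where "\<Phi> u = (\<Sum>i<b. \<zeta> ^ i * \<phi> (u i))" for u
  let ?A = "PiE {..<b} (\<lambda>_. UNIV :: 'a set)"
  have "inj_on \<Phi> ?A"
  proof (rule inj_onI)
    fix u v assume "u \<in> ?A" "v \<in> ?A" "\<Phi> u = \<Phi> v"
    then have "(\<Sum>i<b. \<zeta> ^ i * \<phi> (u i - v i)) = 0"
      by (simp add: \<Phi>_def hom_diff right_diff_distrib sum_subtractf)
    then show "u = v"
      using independent[of "\<lambda>i. u i - v i"] \<open>u \<in> ?A\<close> \<open>v \<in> ?A\<close> by (intro PiE_ext) auto
  qed
  then have "card (\<Phi> ` ?A) = CARD('b)"
    by (simp add: card_image card_PiE card)
  then have "\<Phi> ` ?A = UNIV"
    by (simp add: card_subset_eq)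
  then show ?thesis
    unfolding \<Phi>_def by blast
qed

section \<open>Sums of \<open>k\<close>-th powers and Waring numbers\<close>

lemma sum_of_kth_powers_0: "sum_of_kth_powers 0 k 0"
  unfolding sum_of_kth_powers_def by simp

lemma sum_of_kth_powers_power: "sum_of_kth_powers 1 k (x ^ k)"
  unfolding sum_of_kth_powers_def by (intro exI[of _ "[x]"]) simp

lemma sum_of_kth_powers_add:
  assumes "sum_of_kth_powers s k x" "sum_of_kth_powers t k y"
  shows "sum_of_kth_powers (s + t) k (x + y)"
proof -
  obtain xs ys where "length xs = s" "x = sum_list (map (\<lambda>x. x ^ k) xs)"
    "length ys = t" "y = sum_list (map (\<lambda>x. x ^ k) ys)"
    using assms unfolding sum_of_kth_powers_def by blast
  then show ?thesis
    unfolding sum_of_kth_powers_def by (intro exI[of _ "xs @ ys"]) simp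
qed

lemma sum_of_kth_powers_mono:
  assumes "sum_of_kth_powers s k x" "s \<le> t" "0 < k"
  shows "sum_of_kth_powers t k x"
proof -
  have "sum_of_kth_powers (t - s) k 0"
    using assms(3) unfolding sum_of_kth_powers_def
    by (intro exI[of _ "replicate (t - s) 0"]) (simp add: sum_list_replicate power_0_left)
  from sum_of_kth_powers_add[OF assms(1) this] assms(2) show ?thesis
    by simp
qed

lemma sum_of_kth_powers_sum:
  assumes "finite A" "\<And>i. i \<in> A \<Longrightarrow> sum_of_kth_powers t k (f i)"
  shows "sum_of_kth_powers (card A * t) k (\<Sum>i\<in>A. f i)"
  using assms by (induction A rule: finite_induct) (simp_all add: sum_of_kth_powers_0 sum_of_kth_powers_add)

lemma sum_of_kth_powers_sum_powers:
  "finite A \<Longrightarrow> sum_of_kth_powers (card A) k (\<Sum>i\<in>A. f i ^ k)"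
  using sum_of_kth_powers_sum[of A 1 k "\<lambda>i. f i ^ k", OF _ sum_of_kth_powers_power] by simp

lemma sum_of_kth_powers_iff: "sum_of_kth_powers s k y \<longleftrightarrow> (\<exists>w. y = (\<Sum>j<s. w j ^ k))"
proof
  assume "sum_of_kth_powers s k y"
  then obtain xs where "length xs = s" "y = sum_list (map (\<lambda>x. x ^ k) xs)"
    unfolding sum_of_kth_powers_def by blast
  then show "\<exists>w. y = (\<Sum>j<s. w j ^ k)"
    by (intro exI[of _ "nth xs"]) (simp add: sum_list_sum_nth atLeast0LessThan)
next
  assume "\<exists>w. y = (\<Sum>j<s. w j ^ k)"
  then show "sum_of_kth_powers s k y"
    using sum_of_kth_powers_sum_powers[of "{..<s}"] by auto
qed

definition waring_bound :: "nat \<Rightarrow> nat \<Rightarrow> 'a::field itself \<Rightarrow> bool" where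
  "waring_bound s k _ \<longleftrightarrow> (\<forall>y::'a. sum_of_kth_powers s k y)"

lemma waring_number_eq_Least:
  "waring_number k TYPE('a::{field,finite}) =
     (if \<exists>s. waring_bound s k TYPE('a) then Some (LEAST s. waring_bound s k TYPE('a)) else None)"
  by (simp add: waring_number_def waring_bound_def)

lemma waring_number_eq_mult_if_waring_bound_iff:
  assumes "0 < b"
    and bound_iff: "\<And>s. waring_bound s k' TYPE('b::{field,finite}) \<longleftrightarrow>
      waring_bound (s div b) k TYPE('a::{field,finite})"
  shows "waring_number k' TYPE('b) = map_option ((*) b) (waring_number k TYPE('a))"
proof (cases "\<exists>t. waring_bound t k TYPE('a)")
  case True
  define t where "t = (LEAST t. waring_bound t k TYPE('a))"
  have t: "waring_bound t k TYPE('a)" and t_least: "\<And>t'. waring_bound t' k TYPE('a) \<Longrightarrow> t \<le> t'"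
    unfolding t_def using True by (auto intro: LeastI_ex Least_le)
  have "waring_bound (b * t) k' TYPE('b)"
    using bound_iff t \<open>0 < b\<close> by simp
  moreover have "(LEAST s. waring_bound s k' TYPE('b)) = b * t"
  proof (rule Least_equality)
    show "waring_bound (b * t) k' TYPE('b)" by fact
    fix s assume "waring_bound s k' TYPE('b)"
    then have "t \<le> s div b"
      using bound_iff t_least by blast
    then show "b * t \<le> s"
      using \<open>0 < b\<close> by (simp add: less_eq_div_iff_mult_less_eq mult.commute)
  qed
  ultimately show ?thesis
    using True by (auto simp: waring_number_eq_Least t_def)
next
  case False
  then show ?thesis
    using bound_iff by (auto simp: waring_number_eq_Least)
qed

lemma exists_small_fiber:
  assumes "0 < b" and "\<And>j. j < s \<Longrightarrow> I j < b"
  shows "\<exists>i<b. b * card {j. j < s \<and> I j = i} \<le> s"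
proof (rule ccontr)
  assume "\<not> ?thesis"
  then have "(\<Sum>i<b. s + 1) \<le> (\<Sum>i<b. b * card {j. j < s \<and> I j = i})"
    by (intro sum_mono) (auto simp: not_le Suc_le_eq)
  also have "(\<Sum>i<b. card {j. j < s \<and> I j = i}) = (\<Sum>j<s. 1)"
    using assms(2) by (subst sum.group[symmetric, of "{..<s}" "{..<b}" I "\<lambda>_. 1::nat"]) (auto intro!: sum.cong)
  then have "(\<Sum>i<b. b * card {j. j < s \<and> I j = i}) = b * s"
    by (simp flip: sum_distrib_left)
  finally show False
    using assms(1) by simp
qed

locale kth_power_basis = field_hom \<phi> for \<phi> :: "'a::{field,finite} \<Rightarrow> 'b::{field,finite}" +
  fixes \<zeta> :: 'b and b k k' :: nat
  assumes b_pos: "0 < b" and k_pos: "0 < k" and k'_pos: "0 < k'"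
    and kth_powers: "range (\<lambda>y::'b. y ^ k') = {\<zeta> ^ i * \<phi> (z ^ k) | i z. i < b}"
    and independent: "\<And>u. (\<Sum>i<b. \<zeta> ^ i * \<phi> (u i)) = 0 \<Longrightarrow> \<forall>i<b. u i = 0"
    and spanning: "\<And>y. \<exists>u. y = (\<Sum>i<b. \<zeta> ^ i * \<phi> (u i))"
begin

lemma sum_of_kth_powers_times_basis:
  assumes "sum_of_kth_powers t k x" "i < b"
  shows "sum_of_kth_powers t k' (\<zeta> ^ i * \<phi> x)"
proof -
  obtain z where z: "x = (\<Sum>j<t. z j ^ k)"
    using assms(1) sum_of_kth_powers_iff by blast
  have "\<zeta> ^ i * \<phi> (z j ^ k) \<in> range (\<lambda>y. y ^ k')" for j
    using kth_powers assms(2) by blast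
  then have "sum_of_kth_powers 1 k' (\<zeta> ^ i * \<phi> (z j ^ k))" for j
    using sum_of_kth_powers_power by (metis imageE)
  then have "sum_of_kth_powers (card {..<t} * 1) k' (\<Sum>j<t. \<zeta> ^ i * \<phi> (z j ^ k))"
    by (intro sum_of_kth_powers_sum) simp_all
  then show ?thesis
    by (simp add: z hom_sum sum_distrib_left)
qed

lemma waring_bound_mult:
  assumes "waring_bound t k TYPE('a)"
  shows "waring_bound (b * t) k' TYPE('b)"
  unfolding waring_bound_def
proof
  fix y :: 'b
  obtain u where "y = (\<Sum>i<b. \<zeta> ^ i * \<phi> (u i))"
    using spanning by blast
  moreover have "sum_of_kth_powers (card {..<b} * t) k' (\<Sum>i<b. \<zeta> ^ i * \<phi> (u i))"
    using assms by (intro sum_of_kth_powers_sum sum_of_kth_powers_times_basis)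
      (auto simp: waring_bound_def)
  ultimately show "sum_of_kth_powers (b * t) k' y"
    by simp
qed

text \<open>
  Write \<open>x\<close> in every coordinate. Sorting the \<open>s\<close> summands by their coordinate, every
  coordinate equals \<open>x\<close>, and some coordinate receives at most \<open>s div b\<close> summands.
\<close>

lemma waring_bound_div:
  assumes "waring_bound s k' TYPE('b)"
  shows "waring_bound (s div b) k TYPE('a)"
  unfolding waring_bound_def
proof
  fix x :: 'a
  obtain w where w: "(\<Sum>i<b. \<zeta> ^ i * \<phi> x) = (\<Sum>j<s. w j ^ k')"
    using assms sum_of_kth_powers_iff unfolding waring_bound_def by blast
  have "\<forall>j. \<exists>i z. i < b \<and> w j ^ k' = \<zeta> ^ i * \<phi> (z ^ k)"
    using kth_powers by blast
  then obtain I Z where IZ: "\<And>j. I j < b" "\<And>j. w j ^ k' = \<zeta> ^ I j * \<phi> (Z j ^ k)"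
    by metis
  define J where "J i = {j. j < s \<and> I j = i}" for i
  define X where "X i = (\<Sum>j\<in>J i. Z j ^ k)" for i
  have "(\<Sum>j<s. w j ^ k') = (\<Sum>i<b. \<Sum>j\<in>J i. \<zeta> ^ I j * \<phi> (Z j ^ k))"
    unfolding IZ(2) J_def using IZ(1)
    by (subst sum.group[symmetric, of "{..<s}" "{..<b}" I]) (auto intro!: sum.cong)
  also have "\<dots> = (\<Sum>i<b. \<zeta> ^ i * \<phi> (X i))"
    by (simp add: X_def J_def hom_sum sum_distrib_left)
  finally have "(\<Sum>i<b. \<zeta> ^ i * \<phi> (x - X i)) = 0"
    using w by (simp add: hom_diff right_diff_distrib sum_subtractf)
  then have x: "x = X i" if "i < b" for i
    using independent that by fastforce
  obtain i where "i < b" "b * card (J i) \<le> s"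
    using exists_small_fiber[OF b_pos, of s I] IZ(1) unfolding J_def by blast
  have "sum_of_kth_powers (card (J i)) k x"
    unfolding x[OF \<open>i < b\<close>] X_def by (rule sum_of_kth_powers_sum_powers) (simp add: J_def)
  moreover have "card (J i) \<le> s div b"
    using \<open>b * card (J i) \<le> s\<close> b_pos by (simp add: less_eq_div_iff_mult_less_eq mult.commute)
  ultimately show "sum_of_kth_powers (s div b) k x"
    using sum_of_kth_powers_mono k_pos by blast
qed

theorem waring_number_eq_mult: "waring_number k' TYPE('b) = map_option ((*) b) (waring_number k TYPE('a))"
proof (rule waring_number_eq_mult_if_waring_bound_iff[OF b_pos])
  fix s
  show "waring_bound s k' TYPE('b) \<longleftrightarrow> waring_bound (s div b) k TYPE('a)"
  proof
    assume "waring_bound (s div b) k TYPE('a)"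
    then have "waring_bound (b * (s div b)) k' TYPE('b)"
      by (rule waring_bound_mult)
    then show "waring_bound s k' TYPE('b)"
      using sum_of_kth_powers_mono[OF _ times_div_less_eq_dividend k'_pos] by (auto simp: waring_bound_def)
  qed (rule waring_bound_div)
qed

end

lemma exists_embedding_onto_fixed_points:
  assumes "prime p" "0 < a" "0 < b"
    and "CARD('F::{field,finite}) = p ^ a" "CARD('K::{field,finite}) = p ^ (a * b)"
  shows "\<exists>\<phi>::'F \<Rightarrow> 'K. field_hom \<phi> \<and> range \<phi> = {z. z ^ p ^ a = z}"
proof -
  have "1 < p ^ a"
    using one_less_power[OF prime_gt_1_nat[OF assms(1)] assms(2)] .
  have "CARD('K) - 1 = (p ^ a - 1) * (\<Sum>i<b. (p ^ a) ^ i)"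
    using assms(5) nat_power_diff_1_eq[of "p ^ a" b] \<open>1 < p ^ a\<close> by (simp add: power_mult)
  then have card_fixed: "card {z::'K. z ^ p ^ a = z} = p ^ a"
    using \<open>1 < p ^ a\<close> by (intro card_power_fixed_points) simp_all
  moreover have "CHAR('K) = CHAR('F)"
    using assms by (simp add: CHAR_eq_of_card_prime_power)
  ultimately obtain \<phi> :: "'F \<Rightarrow> 'K" where "field_hom \<phi>"
    using finite_field_embedding assms(4) by fastforce
  moreover have "range \<phi> = {z. z ^ p ^ a = z}"
    using range_field_hom_eq_fixed_points[OF \<open>field_hom \<phi>\<close>] card_fixed assms(4) by simp
  ultimately show ?thesis
    by blast
qed

lemma kth_power_basis_prime_degree_extension:
  fixes \<phi> :: "'F::{field,finite} \<Rightarrow> 'K::{field,finite}"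
  assumes "prime p" "prime b" "0 < a"
    and card_F: "CARD('F) = p ^ a" and card_K: "CARD('K) = p ^ (a * b)"
    and k: "k * c = p ^ a - 1" and k': "k' * (b * c) = p ^ (a * b) - 1"
    and not_dvd: "\<not> b * c dvd p ^ a - 1"
    and \<phi>: "field_hom \<phi>" "range \<phi> = {z. z ^ p ^ a = z}" and \<gamma>: "primitive_element \<gamma>"
  shows "kth_power_basis \<phi> (\<gamma> ^ k') b k k'"
proof -
  interpret field_hom \<phi> by fact
  define q where "q = p ^ a"
  have "1 < q"
    using one_less_power[OF prime_gt_1_nat[OF assms(1)] assms(3)] by (simp add: q_def)
  have "0 < b"
    using assms(2) by (rule prime_gt_0_nat)
  note exponents = prime_degree_exponents[OF \<open>1 < q\<close> \<open>0 < b\<close> k[folded q_def]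
      k'[unfolded power_mult, folded q_def] not_dvd[folded q_def]]
  have card_K': "CARD('K) - 1 = k' * (b * c)" "CARD('K) - 1 = (q - 1) * (\<Sum>i<b. q ^ i)"
    using card_K k' nat_power_diff_1_eq[of q b] \<open>1 < q\<close> by (simp_all add: q_def power_mult)
  have conjugates: "inj_on (\<lambda>j. (\<gamma> ^ k') ^ q ^ j) {..<b}"
    using inj_on_conjugates_of_primitive_power[OF \<gamma> card_K'(1) assms(2)] exponents(4,5) by blast
  have "q = CHAR('K) ^ a"
    using CHAR_eq_of_card_prime_power[OF card_K assms(1)] \<open>0 < a\<close> \<open>0 < b\<close> by (simp add: q_def)
  have independent: "\<forall>i<b. u i = 0" if "(\<Sum>i<b. (\<gamma> ^ k') ^ i * \<phi> (u i)) = 0" for u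
  proof -
    have "(\<Sum>i<b. \<phi> (u i) * (\<gamma> ^ k') ^ i) = 0"
      using that by (simp add: mult.commute)
    moreover have "\<phi> (u i) ^ q = \<phi> (u i)" for i
      using \<phi>(2) by (auto simp: q_def)
    ultimately have "\<forall>i<b. \<phi> (u i) = 0"
      using frobenius_invariant_coeffs_eq_0[where c = "\<lambda>i. \<phi> (u i)",
          OF prime_CHAR_finite_field \<open>q = CHAR('K) ^ a\<close> _ conjugates]
      by blast
    then show ?thesis
      by (simp add: hom_eq_0_iff)
  qed
  moreover have "range (\<lambda>y::'K. y ^ k') = {(\<gamma> ^ k') ^ i * \<phi> (z ^ k) | i z. i < b}"
    using \<open>1 < q\<close> \<open>0 < b\<close> exponents(1,2)
    by (intro kth_powers_decomposition[OF \<phi>(1) \<gamma> \<phi>(2)[folded q_def] _ card_K'(2)[symmetric]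
          exponents(3)]) simp_all
  moreover have "CARD('K) = CARD('F) ^ b"
    by (simp add: card_F card_K power_mult)
  then have "\<exists>u. y = (\<Sum>i<b. (\<gamma> ^ k') ^ i * \<phi> (u i))" for y
    using field_hom_combinations_surj[OF \<phi>(1)] independent by blast
  ultimately show ?thesis
    using \<open>0 < b\<close> exponents(1,2) by unfold_locales auto
qed

theorem waring_number_prime_degree_extension:
  assumes "prime p" "prime b" "0 < a"
    and "CARD('F::{field,finite}) = p ^ a" "CARD('K::{field,finite}) = p ^ (a * b)"
    and "k * c = p ^ a - 1" "k' * (b * c) = p ^ (a * b) - 1" "\<not> b * c dvd p ^ a - 1"
  shows "waring_number k' TYPE('K) = map_option ((*) b) (waring_number k TYPE('F))"
proof -
  obtain \<phi> :: "'F \<Rightarrow> 'K" where "field_hom \<phi>" "range \<phi> = {z. z ^ p ^ a = z}"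
    using exists_embedding_onto_fixed_points[OF assms(1,3) prime_gt_0_nat[OF assms(2)] assms(4,5)]
    by blast
  moreover obtain \<gamma> :: 'K where "primitive_element \<gamma>"
    using exists_primitive_element by blast
  ultimately interpret kth_power_basis \<phi> "\<gamma> ^ k'" b k k'
    by (rule kth_power_basis_prime_degree_extension[OF assms])
  show ?thesis
    by (rule waring_number_eq_mult)
qed

theorem mainTheorem6:
  fixes p b a c :: nat
  assumes "prime p" and "prime b" and "p \<noteq> b"
    and "a > 0" and "c > 0"
    and "primitive_divisor c p a"
    and "b dvd p ^ a - 1" and "\<not> b dvd (p ^ a - 1) div c"
    and "card (UNIV :: 'F::{field,finite} set) = p ^ a"
    and "card (UNIV :: 'K::{field,finite} set) = p ^ (a * b)"
  shows "waring_number ((p ^ (a * b) - 1) div (b * c)) TYPE('K)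
         = map_option (\<lambda>s. b * s) (waring_number ((p ^ a - 1) div c) TYPE('F))"
proof -
  define q where "q = p ^ a"
  have "1 \<le> q"
    using one_less_power[OF prime_gt_1_nat[OF assms(1)] assms(4)] by (simp add: q_def)
  have "c dvd q - 1"
    using assms(6) by (simp add: primitive_divisor_def q_def)
  moreover have "[q = 1] (mod b)"
    using assms(7)[folded q_def] by (simp only: cong_altdef_nat[OF \<open>1 \<le> q\<close>])
  then have "b dvd (\<Sum>i<b. q ^ i)"
    by (rule dvd_geometric_sum)
  ultimately have "b * c dvd (\<Sum>i<b. q ^ i) * (q - 1)"
    by (simp add: mult_dvd_mono)
  then have "b * c dvd q ^ b - 1"
    by (simp only: nat_power_diff_1_eq[OF \<open>1 \<le> q\<close>] mult.commute)
  moreover have "\<not> b * c dvd q - 1"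
    using assms(5,8) by (auto simp: q_def elim!: dvdE)
  ultimately show ?thesis
    using waring_number_prime_degree_extension[OF assms(1,2,4,9,10),
        of "(q - 1) div c" c "(q ^ b - 1) div (b * c)"] \<open>c dvd q - 1\<close>
    by (simp add: q_def power_mult)
qed

end
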